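(* For a monoid $M$, the following statements are equivalent. (a) $M$ can be embedded into a free commutative monoid of finite rank. (b) $M$ has finite rank and can be embedded into a free commutative monoid (of possibly infinite rank). (c) There exists $d\in\mathbb{N}$ such that $M$ is isomorphic to a submonoid of $(\mathbb{N}^d,+)$ of rank $d$ (a maximal-rank submonoid).
   Context: Convention: all monoids are commutative, cancellative, and reduced (the identity $0$ is the only invertible element), and are written additively. $\mathrm{gp}(M)$ denotes the Grothendieck group of $M$, and the rank of $M$, $\mathrm{rank}(M)$, is the rank of the $\mathbb{Z}$-module $\mathrm{gp}(M)$ (i.e. $\dim_\mathbb{Q}\mathbb{Q}\otimes_\mathbb{Z}\mathrm{gp}(M)$). $\mathbb{N}=\{0,1,2,\dots\}$. *)

theory Defs
  imports Main "HOL-Library.Function_Algebras"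
begin

text \<open>Monoids are modelled as carrier sets inside an ambient commutative cancellative
  additive monoid type; they are submonoids that are reduced.\<close>

definition is_monoid :: "'a::cancel_comm_monoid_add set \<Rightarrow> bool" where
  "is_monoid M \<longleftrightarrow> 0 \<in> M \<and> (\<forall>x\<in>M. \<forall>y\<in>M. x + y \<in> M)
     \<and> (\<forall>x\<in>M. \<forall>y\<in>M. x + y = 0 \<longrightarrow> x = 0)"

fun nsm :: "nat \<Rightarrow> 'a::monoid_add \<Rightarrow> 'a" where
  "nsm 0 a = 0"
| "nsm (Suc k) a = a + nsm k a"

text \<open>Elements of gp(M) are differences a - b with a, b in M, represented by pairs (a,b).
  A list of such elements is Z-linearly independent in gp(M) iff every integer relation
  sum_i (p_i - q_i)(a_i - b_i) = 0 (p_i, q_i natural), i.e. the equality below in M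
  (M is cancellative), forces p_i = q_i for all i.\<close>
definition gp_indep :: "'a::cancel_comm_monoid_add set \<Rightarrow> ('a \<times> 'a) list \<Rightarrow> bool" where
  "gp_indep M xs \<longleftrightarrow> set xs \<subseteq> M \<times> M \<and>
     (\<forall>p q :: nat \<Rightarrow> nat.
        (\<Sum>i<length xs. nsm (p i) (fst (xs!i)) + nsm (q i) (snd (xs!i)))
          = (\<Sum>i<length xs. nsm (p i) (snd (xs!i)) + nsm (q i) (fst (xs!i)))
        \<longrightarrow> (\<forall>i<length xs. p i = q i))"

definition has_rank :: "'a::cancel_comm_monoid_add set \<Rightarrow> nat \<Rightarrow> bool" where
  "has_rank M d \<longleftrightarrow> (\<exists>xs. gp_indep M xs \<and> length xs = d)
                    \<and> (\<forall>xs. gp_indep M xs \<longrightarrow> length xs \<le> d)"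

definition finite_rank :: "'a::cancel_comm_monoid_add set \<Rightarrow> bool" where
  "finite_rank M \<longleftrightarrow> (\<exists>d. has_rank M d)"

definition mon_hom_on :: "'a::cancel_comm_monoid_add set \<Rightarrow> ('a \<Rightarrow> 'b::cancel_comm_monoid_add) \<Rightarrow> bool" where
  "mon_hom_on M f \<longleftrightarrow> f 0 = 0 \<and> (\<forall>x\<in>M. \<forall>y\<in>M. f (x + y) = f x + f y)"

definition free_cmon :: "'i set \<Rightarrow> ('i \<Rightarrow> nat) set" where
  "free_cmon I = {v. finite {i. v i \<noteq> 0} \<and> (\<forall>i. i \<notin> I \<longrightarrow> v i = 0)}"

definition embeds_into_free :: "'a::cancel_comm_monoid_add set \<Rightarrow> 'i set \<Rightarrow> bool" where
  "embeds_into_free M I \<longleftrightarrow>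
     (\<exists>f. mon_hom_on M f \<and> inj_on f M \<and> f ` M \<subseteq> free_cmon I)"

definition Nd :: "nat \<Rightarrow> (nat \<Rightarrow> nat) set" where
  "Nd d = {v. \<forall>i\<ge>d. v i = 0}"

definition isomorphic_mon :: "'a::cancel_comm_monoid_add set \<Rightarrow> 'b::cancel_comm_monoid_add set \<Rightarrow> bool" where
  "isomorphic_mon M S \<longleftrightarrow> (\<exists>g. mon_hom_on M g \<and> bij_betw g M S)"

end

theory Submission
  imports Defs "HOL-Library.FuncSet"
begin

text \<open>(a) \<open>\<Rightarrow>\<close> (c): given an embedding into \<open>\<nat>\<^sup>d\<close>, keep a minimal set \<open>J\<close> of coordinates on
  which it is still injective. Minimality gives, for each \<open>j \<in> J\<close>, two elements whose
  coordinates in \<open>J\<close> differ only at \<open>j\<close>; their images form a triangular, hence independent,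
  family of \<open>|J|\<close> pairs in \<open>\<nat>\<^sup>J\<close>, and a pigeonhole count shows that a submonoid of \<open>\<nat>\<^sup>k\<close> has
  rank at most \<open>k\<close>. (c) \<open>\<Rightarrow>\<close> (a) is immediate, and (a) \<open>\<Rightarrow>\<close> (b) holds because injective
  homomorphisms preserve the rank. (b) \<open>\<Rightarrow>\<close> (a): an element with a nonzero coordinate outside
  the finitely many supports of a maximal independent family could be appended to that family,
  so the embedding uses only finitely many coordinates.\<close>

lemma nsm_add: "nsm (m + n) a = nsm m a + nsm n a"
  by (induction m) (simp_all add: add.assoc)

lemma nsm_nat [simp]: "nsm c (x :: nat) = c * x"
  by (induction c) simp_all

lemma nsm_fun: "nsm c (v :: 'i \<Rightarrow> nat) = (\<lambda>t. c * v t)"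
  by (induction c) auto

lemma sum_fun_apply: "sum g A t = (\<Sum>i\<in>A. g i t)"
  by (induction A rule: infinite_finite_induct) simp_all

lemma is_monoid_nsm: "is_monoid M \<Longrightarrow> a \<in> M \<Longrightarrow> nsm n a \<in> M"
  by (induction n) (auto simp: is_monoid_def)

lemma is_monoid_sum: "is_monoid M \<Longrightarrow> (\<And>i. i \<in> A \<Longrightarrow> g i \<in> M) \<Longrightarrow> sum g A \<in> M"
  by (induction A rule: infinite_finite_induct) (auto simp: is_monoid_def)

lemma mon_hom_on_nsm:
  "is_monoid M \<Longrightarrow> mon_hom_on M f \<Longrightarrow> a \<in> M \<Longrightarrow> f (nsm n a) = nsm n (f a)"
  by (induction n) (auto simp: mon_hom_on_def is_monoid_nsm)

lemma mon_hom_on_sum: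
  "is_monoid M \<Longrightarrow> mon_hom_on M f \<Longrightarrow> (\<And>i. i \<in> A \<Longrightarrow> g i \<in> M)
   \<Longrightarrow> f (sum g A) = (\<Sum>i\<in>A. f (g i))"
  by (induction A rule: infinite_finite_induct) (auto simp: mon_hom_on_def is_monoid_sum)

lemma is_monoid_image:
  assumes M: "is_monoid M" and f: "mon_hom_on M f" and inj: "inj_on f M"
  shows "is_monoid (f ` M)"
  unfolding is_monoid_def
proof (intro conjI ballI impI)
  show "0 \<in> f ` M"
    using M f by (metis image_eqI is_monoid_def mon_hom_on_def)
next
  fix u v assume "u \<in> f ` M" "v \<in> f ` M"
  then obtain x y where "x \<in> M" "y \<in> M" "u + v = f (x + y)"
    using f by (auto simp: mon_hom_on_def)
  with M show "u + v \<in> f ` M"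
    by (simp add: is_monoid_def)
next
  fix u v assume uv: "u \<in> f ` M" "v \<in> f ` M" "u + v = 0"
  then obtain x y where xy: "x \<in> M" "y \<in> M" "u = f x" "v = f y" by blast
  with uv M f have "f (x + y) = f 0"
    by (simp add: mon_hom_on_def)
  with xy M inj have "x + y = 0"
    by (simp add: inj_on_eq_iff is_monoid_def)
  with xy M have "x = 0"
    unfolding is_monoid_def by blast
  with xy f show "u = 0"
    by (simp add: mon_hom_on_def)
qed

text \<open>\<open>lin_comb xs p q = \<Sum> p\<^sub>i a\<^sub>i + q\<^sub>i b\<^sub>i\<close> for \<open>xs = [(a\<^sub>i, b\<^sub>i)]\<close>; the relation
  \<open>\<Sum> (p\<^sub>i - q\<^sub>i)(a\<^sub>i - b\<^sub>i) = 0\<close> in \<open>gp(M)\<close> reads \<open>lin_comb xs p q = lin_comb xs q p\<close>.\<close>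

definition lin_comb :: "('a::comm_monoid_add \<times> 'a) list \<Rightarrow> (nat \<Rightarrow> nat) \<Rightarrow> (nat \<Rightarrow> nat) \<Rightarrow> 'a" where
  "lin_comb xs p q = (\<Sum>i<length xs. nsm (p i) (fst (xs!i)) + nsm (q i) (snd (xs!i)))"

lemma gp_indep_iff:
  "gp_indep M xs \<longleftrightarrow> set xs \<subseteq> M \<times> M \<and>
     (\<forall>p q. lin_comb xs p q = lin_comb xs q p \<longrightarrow> (\<forall>i<length xs. p i = q i))"
  by (simp add: gp_indep_def lin_comb_def add.commute)

lemma lin_comb_mem:
  assumes "is_monoid M" "set xs \<subseteq> M \<times> M"
  shows "lin_comb xs p q \<in> M"
  using assms unfolding lin_comb_def
  by (intro is_monoid_sum) (auto simp: is_monoid_def is_monoid_nsm dest!: nth_mem)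

lemma mon_hom_on_lin_comb:
  assumes M: "is_monoid M" and f: "mon_hom_on M f" and xs: "set xs \<subseteq> M \<times> M"
  shows "f (lin_comb xs p q) = lin_comb (map (map_prod f f) xs) p q"
proof -
  have mem: "fst (xs!i) \<in> M" "snd (xs!i) \<in> M" if "i < length xs" for i
    using xs nth_mem[OF that] by auto
  have "f (nsm (p i) (fst (xs!i)) + nsm (q i) (snd (xs!i)))
      = nsm (p i) (f (fst (xs!i))) + nsm (q i) (f (snd (xs!i)))" if "i < length xs" for i
    using mem[OF that] M f by (simp add: mon_hom_on_def is_monoid_nsm mon_hom_on_nsm)
  moreover have "nsm (p i) (fst (xs!i)) + nsm (q i) (snd (xs!i)) \<in> M" if "i < length xs" for i
    using mem[OF that] M by (simp add: is_monoid_def is_monoid_nsm)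
  ultimately show ?thesis
    unfolding lin_comb_def by (subst mon_hom_on_sum[OF M f]) (auto intro!: sum.cong)
qed

lemma lin_comb_snoc:
  "lin_comb (xs @ [(a, b)]) p q = lin_comb xs p q + (nsm (p (length xs)) a + nsm (q (length xs)) b)"
  by (simp add: lin_comb_def nth_append)

lemma lin_comb_swap_if_balanced:
  "\<forall>i<length xs. fst (xs!i) = snd (xs!i) \<Longrightarrow> lin_comb xs p q = lin_comb xs q p"
  unfolding lin_comb_def by (intro sum.cong) (simp_all add: add.commute)

lemma lin_comb_apply:
  "lin_comb xs p q t = (\<Sum>i<length xs. p i * fst (xs!i) t + q i * snd (xs!i) t)"
  by (simp add: lin_comb_def sum_fun_apply nsm_fun)

lemma mult_cross_cancel_nat:
  fixes p q a b :: nat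
  assumes "p * a + q * b = p * b + q * a" and "a \<noteq> b"
  shows "p = q"
proof -
  have "(int p - int q) * (int a - int b) = 0"
    using arg_cong[OF assms(1), of int] by (simp add: algebra_simps)
  with assms(2) show ?thesis by simp
qed

text \<open>A pair \<open>(a, b)\<close> can be appended to an independent family if some additive functional
  separates \<open>a\<close> from \<open>b\<close> but takes equal values on the two entries of every earlier pair:
  applied to a relation it forces equal coefficients of the new pair, which then cancel.\<close>

lemma gp_indep_snoc:
  fixes \<phi> :: "'a::cancel_comm_monoid_add \<Rightarrow> nat"
  assumes M: "is_monoid M" and ind: "gp_indep M xs" and ab: "a \<in> M" "b \<in> M"
    and \<phi>: "mon_hom_on M \<phi>" and bal: "\<forall>i<length xs. \<phi> (fst (xs!i)) = \<phi> (snd (xs!i))"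
    and sep: "\<phi> a \<noteq> \<phi> b"
  shows "gp_indep M (xs @ [(a, b)])"
  unfolding gp_indep_iff
proof (intro conjI allI impI)
  have xs: "set xs \<subseteq> M \<times> M" using ind by (simp add: gp_indep_iff)
  then show snoc_mem: "set (xs @ [(a, b)]) \<subseteq> M \<times> M" using ab by simp
  fix p q i assume rel: "lin_comb (xs @ [(a, b)]) p q = lin_comb (xs @ [(a, b)]) q p"
    and i: "i < length (xs @ [(a, b)])"
  let ?r = "length xs" and ?ys = "map (map_prod \<phi> \<phi>) xs"
  have "lin_comb ?ys p q = lin_comb ?ys q p"
    using bal by (intro lin_comb_swap_if_balanced) simp
  moreover have "\<phi> (lin_comb (xs @ [(a, b)]) p' q') = lin_comb ?ys p' q' + (p' ?r * \<phi> a + q' ?r * \<phi> b)"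
    for p' q'
    by (subst mon_hom_on_lin_comb[OF M \<phi> snoc_mem]) (simp add: lin_comb_snoc)
  ultimately have "p ?r * \<phi> a + q ?r * \<phi> b = q ?r * \<phi> a + p ?r * \<phi> b"
    using arg_cong[OF rel, of \<phi>] by simp
  with sep have last: "p ?r = q ?r"
    by (intro mult_cross_cancel_nat[of "p ?r" "\<phi> a" "q ?r" "\<phi> b"]) (simp_all add: add.commute)
  with rel have "lin_comb xs p q = lin_comb xs q p"
    by (simp add: lin_comb_snoc add.commute add.left_commute)
  with ind have "\<forall>i<?r. p i = q i"
    by (simp add: gp_indep_iff)
  with last i show "p i = q i"
    by (auto simp: less_Suc_eq)
qed

lemma gp_indep_image_iff:
  assumes M: "is_monoid M" and f: "mon_hom_on M f" and inj: "inj_on f M"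
    and xs: "set xs \<subseteq> M \<times> M"
  shows "gp_indep (f ` M) (map (map_prod f f) xs) \<longleftrightarrow> gp_indep M xs"
proof -
  have "lin_comb (map (map_prod f f) xs) p q = lin_comb (map (map_prod f f) xs) q p
      \<longleftrightarrow> lin_comb xs p q = lin_comb xs q p" for p q
    using inj_on_eq_iff[OF inj lin_comb_mem[OF M xs] lin_comb_mem[OF M xs]]
    by (simp add: mon_hom_on_lin_comb[OF M f xs])
  moreover have "set (map (map_prod f f) xs) \<subseteq> f ` M \<times> f ` M"
    using xs by auto
  ultimately show ?thesis
    using xs by (simp add: gp_indep_iff)
qed

lemma has_rank_image:
  assumes M: "is_monoid M" and f: "mon_hom_on M f" and inj: "inj_on f M"
    and rank: "has_rank (f ` M) d"
  shows "has_rank M d"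
  unfolding has_rank_def
proof (intro conjI allI impI)
  obtain ys where ys: "gp_indep (f ` M) ys" "length ys = d"
    using rank by (auto simp: has_rank_def)
  then have "set ys \<subseteq> f ` M \<times> f ` M"
    by (simp add: gp_indep_iff)
  then have "ys \<in> lists (map_prod f f ` (M \<times> M))"
    by (simp add: map_prod_surj_on lists_eq_set)
  then obtain xs where "xs \<in> lists (M \<times> M)" "ys = map (map_prod f f) xs"
    unfolding lists_image by blast
  with ys gp_indep_image_iff[OF M f inj] show "\<exists>xs. gp_indep M xs \<and> length xs = d"
    by (auto simp: lists_eq_set)
next
  fix xs assume "gp_indep M xs"
  then have "gp_indep (f ` M) (map (map_prod f f) xs)"
    using gp_indep_image_iff[OF M f inj] by (simp add: gp_indep_iff)
  with rank show "length xs \<le> d"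
    by (auto simp: has_rank_def)
qed

lemma is_monoid_Nd: "is_monoid (Nd d)"
  by (auto simp: is_monoid_def Nd_def fun_eq_iff)

lemma Nd_subset_free_cmon: "Nd d \<subseteq> free_cmon {..<d}"
proof
  fix v assume "v \<in> Nd d"
  then have "{i. v i \<noteq> 0} \<subseteq> {..<d}"
    by (auto simp: Nd_def not_less[symmetric])
  with \<open>v \<in> Nd d\<close> show "v \<in> free_cmon {..<d}"
    unfolding free_cmon_def Nd_def using finite_subset by auto
qed

lemma Nd_le_sum: "v \<in> Nd k \<Longrightarrow> v t \<le> (\<Sum>s<k. v s)"
  by (cases "t < k") (auto simp: Nd_def intro: member_le_sum)

lemma lin_comb_apply_le:
  assumes "\<forall>i<length ys. fst (ys!i) t \<le> B \<and> snd (ys!i) t \<le> B"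
    and "\<forall>i<length ys. p i + q i \<le> N"
  shows "lin_comb ys p q t \<le> length ys * (N * B)"
proof -
  have "p i * fst (ys!i) t + q i * snd (ys!i) t \<le> N * B" if "i < length ys" for i
  proof -
    have "p i * fst (ys!i) t + q i * snd (ys!i) t \<le> p i * B + q i * B"
      using assms(1) that by (intro add_mono mult_le_mono2) auto
    also have "\<dots> \<le> N * B"
      using assms(2) that by (simp add: add_mult_distrib[symmetric])
    finally show ?thesis .
  qed
  then have "lin_comb ys p q t \<le> (\<Sum>i<length ys. N * B)"
    unfolding lin_comb_apply by (intro sum_mono) simp
  then show ?thesis by simp
qed

lemma lin_comb_complement_swap:
  assumes "\<forall>i<length ys. p i \<le> N \<and> p' i \<le> N"
  shows "lin_comb ys p (\<lambda>i. N - p i) + lin_comb ys p' p = lin_comb ys p' (\<lambda>i. N - p' i) + lin_comb ys p p'"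
proof -
  have term_eq: "nsm m a + nsm (N - m) b + (nsm m' a + nsm m b) = nsm (m + m') a + nsm N b"
    if "m \<le> N" for m m' :: nat and a b :: 'a
  proof -
    obtain c where "N = m + c" using \<open>m \<le> N\<close> le_Suc_ex by blast
    then show ?thesis by (simp add: nsm_add add_ac)
  qed
  show ?thesis
    unfolding lin_comb_def sum.distrib[symmetric]
  proof (intro sum.cong refl)
    fix i assume "i \<in> {..<length ys}"
    with assms show "nsm (p i) (fst (ys!i)) + nsm (N - p i) (snd (ys!i))
        + (nsm (p' i) (fst (ys!i)) + nsm (p i) (snd (ys!i)))
      = nsm (p' i) (fst (ys!i)) + nsm (N - p' i) (snd (ys!i))
        + (nsm (p i) (fst (ys!i)) + nsm (p' i) (snd (ys!i)))"
      by (simp add: term_eq add.commute[of "p i"])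
  qed
qed

lemma power_count_ineq:
  fixes n k B :: nat
  assumes "k < n"
  defines "N \<equiv> (n * B + 1) ^ k"
  shows "(n * (N * B) + 1) ^ k < (N + 1) ^ n"
proof -
  have N: "N \<ge> 1" unfolding N_def by simp
  have "(n * (N * B) + 1) ^ k \<le> ((n * B + 1) * N) ^ k"
    using N by (intro power_mono) (simp_all add: algebra_simps)
  also have "\<dots> = N ^ Suc k"
    unfolding power_mult_distrib by (simp only: N_def[symmetric] power_Suc)
  also have "\<dots> \<le> N ^ n"
    using N assms by (intro power_increasing) auto
  also have "\<dots> < (N + 1) ^ n"
    using assms by (intro power_strict_mono) auto
  finally show ?thesis .
qed

lemma Nd_restrict_eq:
  assumes "v \<in> Nd k" "w \<in> Nd k" and "restrict v {..<k} = restrict w {..<k}"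
  shows "v = w"
proof
  fix t
  show "v t = w t"
    using fun_cong[OF assms(3), of t] assms(1,2) by (cases "t < k") (auto simp: Nd_def)
qed

lemma Nd_pairs_bounded:
  assumes "set ys \<subseteq> Nd k \<times> Nd k"
  shows "\<exists>B. \<forall>i<length ys. \<forall>t. fst (ys!i) t \<le> B \<and> snd (ys!i) t \<le> B"
proof (intro exI allI impI)
  define B where "B = (\<Sum>i<length ys. \<Sum>s<k. fst (ys!i) s + snd (ys!i) s)"
  fix i t assume i: "i < length ys"
  have "ys!i \<in> Nd k \<times> Nd k"
    using assms nth_mem[OF i] by blast
  then have "fst (ys!i) \<in> Nd k" "snd (ys!i) \<in> Nd k"
    by (auto simp: mem_Times_iff)
  then have "fst (ys!i) t + snd (ys!i) t \<le> (\<Sum>s<k. fst (ys!i) s) + (\<Sum>s<k. snd (ys!i) s)"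
    by (intro add_mono Nd_le_sum)
  also have "\<dots> = (\<Sum>s<k. fst (ys!i) s + snd (ys!i) s)"
    by (simp add: sum.distrib)
  also have "\<dots> \<le> B"
    unfolding B_def using i by (intro member_le_sum) auto
  finally show "fst (ys!i) t \<le> B \<and> snd (ys!i) t \<le> B" by simp
qed

text \<open>For \<open>n > k\<close> pairs in \<open>\<nat>\<^sup>k\<close> with entries bounded by \<open>B\<close>, the \<open>(N+1)\<^sup>n\<close> combinations
  \<open>\<Sum> p\<^sub>i a\<^sub>i + (N - p\<^sub>i) b\<^sub>i\<close> with \<open>p\<^sub>i \<le> N\<close> lie in a box with only \<open>(nNB+1)\<^sup>k\<close> points, so for
  \<open>N = (nB+1)\<^sup>k\<close> two of them coincide.\<close>

lemma Nd_lin_comb_collision: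
  assumes ys: "set ys \<subseteq> Nd k \<times> Nd k" and "k < length ys"
  shows "\<exists>N p p'. (\<forall>i<length ys. p i \<le> N \<and> p' i \<le> N) \<and> (\<exists>i<length ys. p i \<noteq> p' i)
    \<and> lin_comb ys p (\<lambda>i. N - p i) = lin_comb ys p' (\<lambda>i. N - p' i)"
proof -
  define n where "n = length ys"
  obtain B where B: "\<forall>i<n. \<forall>t. fst (ys!i) t \<le> B \<and> snd (ys!i) t \<le> B"
    using Nd_pairs_bounded[OF ys] by (auto simp: n_def)
  define N where "N = (n * B + 1) ^ k"
  define w where "w p = lin_comb ys p (\<lambda>i. N - p i)" for p
  define D where "D = (\<Pi>\<^sub>E i\<in>{..<n}. {..N})"
  define C where "C = (\<Pi>\<^sub>E t\<in>{..<k}. {..n * (N * B)})"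
  have "restrict (w p) {..<k} \<in> C" if "p \<in> D" for p
  proof -
    have "p i \<le> N" if "i < n" for i
      using \<open>p \<in> D\<close> that by (auto simp: D_def)
    then have "w p t \<le> n * (N * B)" for t
      unfolding w_def n_def using B
      by (intro lin_comb_apply_le) (simp_all add: n_def)
    then show ?thesis by (simp add: C_def)
  qed
  then have "(\<lambda>p. restrict (w p) {..<k}) ` D \<subseteq> C" by blast
  then have "card ((\<lambda>p. restrict (w p) {..<k}) ` D) \<le> card C"
    by (intro card_mono) (simp_all add: C_def finite_PiE)
  also have "\<dots> = (n * (N * B) + 1) ^ k"
    by (simp add: C_def card_PiE)
  also have "\<dots> < (N + 1) ^ n"
    unfolding N_def using \<open>k < length ys\<close> by (intro power_count_ineq) (simp add: n_def)
  also have "\<dots> = card D"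
    by (simp add: D_def card_PiE)
  finally have "\<not> inj_on (\<lambda>p. restrict (w p) {..<k}) D"
    by (rule pigeonhole)
  then obtain p p' where pp: "p \<in> D" "p' \<in> D" "p \<noteq> p'"
      and eq: "restrict (w p) {..<k} = restrict (w p') {..<k}"
    by (auto simp: inj_on_def)
  have "w p = w p'"
    using lin_comb_mem[OF is_monoid_Nd ys] by (intro Nd_restrict_eq[OF _ _ eq]) (simp_all add: w_def)
  moreover from pp have "\<exists>i<n. p i \<noteq> p' i"
    by (metis D_def PiE_ext lessThan_iff)
  moreover from pp have "\<forall>i<n. p i \<le> N \<and> p' i \<le> N"
    by (auto simp: D_def)
  ultimately show ?thesis
    unfolding w_def n_def by blast
qed

lemma gp_indep_length_le_dim:
  assumes "S \<subseteq> Nd k" and ind: "gp_indep S ys"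
  shows "length ys \<le> k"
proof (rule ccontr)
  assume "\<not> length ys \<le> k"
  then have "k < length ys" by simp
  moreover have "set ys \<subseteq> Nd k \<times> Nd k"
    using ind assms(1) by (auto simp: gp_indep_iff)
  ultimately obtain N p p' where bounded: "\<forall>i<length ys. p i \<le> N \<and> p' i \<le> N"
      and ne: "\<exists>i<length ys. p i \<noteq> p' i"
      and eq: "lin_comb ys p (\<lambda>i. N - p i) = lin_comb ys p' (\<lambda>i. N - p' i)"
    using Nd_lin_comb_collision by blast
  from lin_comb_complement_swap[OF bounded] eq have "lin_comb ys p' p = lin_comb ys p p'"
    by simp
  with ind ne show False
    by (auto simp: gp_indep_iff)
qed

lemma mon_hom_on_apply: "mon_hom_on M f \<Longrightarrow> mon_hom_on M (\<lambda>x. f x t)"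
  by (simp add: mon_hom_on_def)

definition coords_separate :: "'a set \<Rightarrow> ('a \<Rightarrow> 'i \<Rightarrow> nat) \<Rightarrow> 'i set \<Rightarrow> bool" where
  "coords_separate M f J \<longleftrightarrow> (\<forall>x\<in>M. \<forall>y\<in>M. (\<forall>j\<in>J. f x j = f y j) \<longrightarrow> x = y)"

lemma coords_separate_if_vanishing:
  assumes "inj_on f M" and "\<forall>m\<in>M. \<forall>t. t \<notin> J \<longrightarrow> f m t = 0"
  shows "coords_separate M f J"
  unfolding coords_separate_def
proof (intro ballI impI)
  fix x y assume "x \<in> M" "y \<in> M" "\<forall>j\<in>J. f x j = f y j"
  with assms(2) have "f x = f y" by (metis ext)
  with assms(1) \<open>x \<in> M\<close> \<open>y \<in> M\<close> show "x = y" by (simp add: inj_on_eq_iff)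
qed

lemma minimal_separating_coords:
  assumes "coords_separate M f J0" and "finite J0"
  shows "\<exists>J\<subseteq>J0. coords_separate M f J \<and> (\<forall>j\<in>J. \<not> coords_separate M f (J - {j}))"
  using assms
proof (induction "card J0" arbitrary: J0 rule: less_induct)
  case less
  show ?case
  proof (cases "\<exists>j\<in>J0. coords_separate M f (J0 - {j})")
    case True
    then obtain j where "j \<in> J0" "coords_separate M f (J0 - {j})" by blast
    with less.prems less.hyps[of "J0 - {j}"] show ?thesis
      by (meson card_Diff1_less finite_Diff subset_trans Diff_subset)
  next
    case False
    with less.prems show ?thesis by blast
  qed
qed

definition coord_restrict :: "(nat \<Rightarrow> 'i) \<Rightarrow> nat \<Rightarrow> ('a \<Rightarrow> 'i \<Rightarrow> nat) \<Rightarrow> 'a \<Rightarrow> nat \<Rightarrow> nat" where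
  "coord_restrict h k f m = (\<lambda>i. if i < k then f m (h i) else 0)"

lemma coord_restrict_in_Nd: "coord_restrict h k f m \<in> Nd k"
  by (simp add: coord_restrict_def Nd_def)

lemma mon_hom_on_coord_restrict: "mon_hom_on M f \<Longrightarrow> mon_hom_on M (coord_restrict h k f)"
  by (auto simp: mon_hom_on_def coord_restrict_def fun_eq_iff)

lemma inj_on_coord_restrict:
  assumes "coords_separate M f (h ` {..<k})"
  shows "inj_on (coord_restrict h k f) M"
proof (rule inj_onI)
  fix x y assume "x \<in> M" "y \<in> M" and eq: "coord_restrict h k f x = coord_restrict h k f y"
  have "f x (h i) = f y (h i)" if "i < k" for i
    using fun_cong[OF eq, of i] that by (simp add: coord_restrict_def)
  then have "\<forall>j\<in>h ` {..<k}. f x j = f y j"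
    by blast
  with assms \<open>x \<in> M\<close> \<open>y \<in> M\<close> show "x = y"
    by (simp add: coords_separate_def)
qed

lemma embeds_into_free_if_coords_separate:
  assumes f: "mon_hom_on M f" and J: "finite J" "coords_separate M f J"
  shows "embeds_into_free M {..<card J}"
proof -
  obtain h where "bij_betw h {0..<card J} J"
    using ex_bij_betw_nat_finite[OF J(1)] by blast
  then have "h ` {..<card J} = J"
    by (simp add: bij_betw_def atLeast0LessThan)
  then have "inj_on (coord_restrict h (card J) f) M"
    using J(2) by (simp add: inj_on_coord_restrict)
  moreover have "coord_restrict h (card J) f ` M \<subseteq> free_cmon {..<card J}"
    using coord_restrict_in_Nd Nd_subset_free_cmon by (meson image_subsetI subsetD)
  ultimately show ?thesis
    unfolding embeds_into_free_def using mon_hom_on_coord_restrict[OF f] by blast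
qed

text \<open>If no coordinate of \<open>J = h ` {..<k}\<close> can be dropped, then for each \<open>i < k\<close> there are
  elements that differ only at coordinate \<open>h i\<close> among those of \<open>J\<close>; their images form a
  triangular, hence independent, family of \<open>k\<close> pairs.\<close>

lemma gp_indep_minimal_coords:
  assumes M: "is_monoid M" and f: "mon_hom_on M f"
    and h: "inj_on h {..<k}" and sep: "coords_separate M f (h ` {..<k})"
    and min: "\<forall>j\<in>h ` {..<k}. \<not> coords_separate M f (h ` {..<k} - {j})"
  defines "g \<equiv> coord_restrict h k f"
  shows "\<exists>xs. gp_indep (g ` M) xs \<and> length xs = k"
proof -
  have "\<exists>x\<in>M. \<exists>y\<in>M. f x (h i) \<noteq> f y (h i) \<and> (\<forall>j\<in>h ` {..<k} - {h i}. f x j = f y j)"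
    if "i < k" for i
  proof -
    from that have "\<not> coords_separate M f (h ` {..<k} - {h i})"
      using min by simp
    then obtain x y where xy: "x \<in> M" "y \<in> M" "x \<noteq> y"
      and agree: "\<forall>j\<in>h ` {..<k} - {h i}. f x j = f y j"
      unfolding coords_separate_def by blast
    have "f x (h i) \<noteq> f y (h i)"
    proof
      assume "f x (h i) = f y (h i)"
      with agree have "\<forall>j\<in>h ` {..<k}. f x j = f y j"
        by (metis DiffI singletonD)
      with sep xy show False unfolding coords_separate_def by blast
    qed
    with xy agree show ?thesis by blast
  qed
  then obtain X Y where XY: "\<And>i. i < k \<Longrightarrow> X i \<in> M \<and> Y i \<in> M \<and> f (X i) (h i) \<noteq> f (Y i) (h i)
      \<and> (\<forall>j\<in>h ` {..<k} - {h i}. f (X i) j = f (Y i) j)"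
    by metis
  define P where "P i = (g (X i), g (Y i))" for i
  have S: "is_monoid (g ` M)"
    unfolding g_def using M f sep
    by (intro is_monoid_image mon_hom_on_coord_restrict inj_on_coord_restrict)
  have "gp_indep (g ` M) (map P [0..<n])" if "n \<le> k" for n
    using that
  proof (induction n)
    case 0
    then show ?case by (simp add: gp_indep_iff)
  next
    case (Suc n)
    have "\<forall>i<length (map P [0..<n]). fst (map P [0..<n] ! i) n = snd (map P [0..<n] ! i) n"
    proof (intro allI impI)
      fix i assume "i < length (map P [0..<n])"
      then have "i < n" by simp
      with Suc.prems inj_onD[OF h, of n i] have "h n \<in> h ` {..<k} - {h i}"
        by auto
      with XY[of i] \<open>i < n\<close> Suc.prems show "fst (map P [0..<n] ! i) n = snd (map P [0..<n] ! i) n"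
        by (simp add: P_def g_def coord_restrict_def)
    qed
    moreover have "g (X n) n \<noteq> g (Y n) n"
      using XY Suc.prems by (simp add: g_def coord_restrict_def)
    moreover have "mon_hom_on (g ` M) (\<lambda>v. v n)"
      by (simp add: mon_hom_on_def)
    moreover have "g (X n) \<in> g ` M" "g (Y n) \<in> g ` M"
      using XY Suc.prems by simp_all
    ultimately have "gp_indep (g ` M) (map P [0..<n] @ [(g (X n), g (Y n))])"
      using Suc by (intro gp_indep_snoc[OF S]) simp_all
    then show ?case
      by (simp add: P_def[symmetric])
  qed
  then show ?thesis by (intro exI[of _ "map P [0..<k]"]) simp
qed

lemma embeds_into_free_imp_rank_dim:
  fixes d :: nat
  assumes M: "is_monoid M" and e: "embeds_into_free M {..<d}"
  shows "\<exists>k g. mon_hom_on M g \<and> inj_on g M \<and> g ` M \<subseteq> Nd k \<and> has_rank (g ` M) k"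
proof -
  obtain f where f: "mon_hom_on M f" "inj_on f M" "f ` M \<subseteq> free_cmon {..<d}"
    using e by (auto simp: embeds_into_free_def)
  then have "coords_separate M f {..<d}"
    by (intro coords_separate_if_vanishing) (auto simp: free_cmon_def)
  then have "\<exists>J\<subseteq>{..<d}. coords_separate M f J \<and> (\<forall>j\<in>J. \<not> coords_separate M f (J - {j}))"
    by (rule minimal_separating_coords) simp
  then obtain J where J: "J \<subseteq> {..<d}" "coords_separate M f J"
      and min: "\<forall>j\<in>J. \<not> coords_separate M f (J - {j})"
    by blast
  from J(1) have "finite J" by (rule finite_subset) simp
  then obtain h where "bij_betw h {0..<card J} J"
    using ex_bij_betw_nat_finite by blast
  then have h: "inj_on h {..<card J}" "h ` {..<card J} = J"
    by (simp_all add: bij_betw_def atLeast0LessThan)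
  define g where "g = coord_restrict h (card J) f"
  have g: "mon_hom_on M g" "inj_on g M" "g ` M \<subseteq> Nd (card J)"
    unfolding g_def using f J h coord_restrict_in_Nd
    by (auto intro: mon_hom_on_coord_restrict inj_on_coord_restrict)
  have "has_rank (g ` M) (card J)"
    unfolding has_rank_def
    using gp_indep_minimal_coords[OF M f(1) h(1)] J min h g(3) gp_indep_length_le_dim
    by (auto simp: g_def)
  with g show ?thesis by blast
qed

text \<open>In finite rank \<open>r\<close>, every element is supported on the union \<open>J\<close> of the supports of a
  maximal independent family: an element nonzero at a coordinate \<open>t \<notin> J\<close> could be appended
  (paired with \<open>0\<close>) to that family, evaluation at \<open>t\<close> being the separating functional.\<close>

lemma finite_rank_imp_finite_support:
  assumes M: "is_monoid M" and rank: "has_rank M r"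
    and f: "mon_hom_on M f" "f ` M \<subseteq> free_cmon I"
  shows "\<exists>J. finite J \<and> (\<forall>m\<in>M. \<forall>t. t \<notin> J \<longrightarrow> f m t = 0)"
proof -
  obtain xs where xs: "gp_indep M xs" "length xs = r"
    using rank by (auto simp: has_rank_def)
  then have xsM: "set xs \<subseteq> M \<times> M" by (simp add: gp_indep_iff)
  define J where "J = (\<Union>(a, b)\<in>set xs. {t. f a t \<noteq> 0} \<union> {t. f b t \<noteq> 0})"
  have "finite J"
    unfolding J_def using xsM f(2) by (auto simp: free_cmon_def)
  moreover have "f m t = 0" if "m \<in> M" "t \<notin> J" for m t
  proof (rule ccontr)
    assume "f m t \<noteq> 0"
    have "\<forall>i<length xs. f (fst (xs!i)) t = f (snd (xs!i)) t"
      using \<open>t \<notin> J\<close> nth_mem unfolding J_def by fastforce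
    moreover have "0 \<in> M" "f 0 t = 0"
      using M f(1) by (simp_all add: is_monoid_def mon_hom_on_def)
    ultimately have "gp_indep M (xs @ [(m, 0)])"
      using \<open>f m t \<noteq> 0\<close> \<open>m \<in> M\<close> mon_hom_on_apply[OF f(1)] by (intro gp_indep_snoc[OF M xs(1)]) auto
    with rank xs(2) show False
      by (fastforce simp: has_rank_def)
  qed
  ultimately show ?thesis by blast
qed

lemma embeds_into_free_mono:
  assumes "embeds_into_free M I" and "I \<subseteq> I'"
  shows "embeds_into_free M I'"
proof -
  have "free_cmon I \<subseteq> free_cmon I'"
    using assms(2) by (auto simp: free_cmon_def)
  with assms(1) show ?thesis
    unfolding embeds_into_free_def by blast
qed

lemma embeds_into_free_imp_finite_rank:
  fixes M :: "'a::cancel_comm_monoid_add set" and d :: nat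
  assumes "is_monoid M" and "embeds_into_free M {..<d}"
  shows "finite_rank M"
proof -
  from embeds_into_free_imp_rank_dim[OF assms] obtain k and g :: "'a \<Rightarrow> nat \<Rightarrow> nat"
    where "mon_hom_on M g" "inj_on g M" "has_rank (g ` M) k"
    by blast
  then have "has_rank M k"
    by (rule has_rank_image[OF assms(1)])
  then show ?thesis
    unfolding finite_rank_def ..
qed

lemma finite_rank_embeds_into_finite_free:
  assumes M: "is_monoid M" and "finite_rank M" and e: "embeds_into_free M I"
  shows "\<exists>d::nat. embeds_into_free M {..<d}"
proof -
  obtain r where r: "has_rank M r"
    using \<open>finite_rank M\<close> by (auto simp: finite_rank_def)
  obtain f where f: "mon_hom_on M f" "inj_on f M" "f ` M \<subseteq> free_cmon I"
    using e by (auto simp: embeds_into_free_def)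
  obtain J where "finite J" "\<forall>m\<in>M. \<forall>t. t \<notin> J \<longrightarrow> f m t = 0"
    using finite_rank_imp_finite_support[OF M r f(1) f(3)] by blast
  with f have "embeds_into_free M {..<card J}"
    by (intro embeds_into_free_if_coords_separate coords_separate_if_vanishing)
  then show ?thesis ..
qed

lemma embeds_into_finite_free_iff_max_rank:
  fixes M :: "'a::cancel_comm_monoid_add set"
  assumes M: "is_monoid M"
  shows "(\<exists>d::nat. embeds_into_free M {..<d})
     \<longleftrightarrow> (\<exists>d::nat. \<exists>S. S \<subseteq> Nd d \<and> is_monoid S \<and> has_rank S d \<and> isomorphic_mon M S)"
proof
  assume "\<exists>d::nat. embeds_into_free M {..<d}"
  then obtain k g where g: "mon_hom_on M g" "inj_on g M" "g ` M \<subseteq> Nd k" "has_rank (g ` M) k"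
    using embeds_into_free_imp_rank_dim[OF M] by blast
  moreover have "is_monoid (g ` M)" "isomorphic_mon M (g ` M)"
    using g is_monoid_image[OF M] by (auto simp: isomorphic_mon_def bij_betw_def)
  ultimately show "\<exists>d::nat. \<exists>S. S \<subseteq> Nd d \<and> is_monoid S \<and> has_rank S d \<and> isomorphic_mon M S"
    by blast
next
  assume "\<exists>d::nat. \<exists>S. S \<subseteq> Nd d \<and> is_monoid S \<and> has_rank S d \<and> isomorphic_mon M S"
  then obtain d S and g :: "'a \<Rightarrow> nat \<Rightarrow> nat" where "S \<subseteq> Nd d" "mon_hom_on M g" "bij_betw g M S"
    unfolding isomorphic_mon_def by blast
  with Nd_subset_free_cmon[of d] have "embeds_into_free M {..<d}"
    unfolding embeds_into_free_def bij_betw_def by blast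
  then show "\<exists>d::nat. embeds_into_free M {..<d}" ..
qed

theorem mainTheorem1:
  fixes M :: "'a::cancel_comm_monoid_add set"
  assumes "is_monoid M"
  shows "let
      a = (\<exists>d::nat. embeds_into_free M {..<d});
      c = (\<exists>d::nat. \<exists>S. S \<subseteq> Nd d \<and> is_monoid S \<and> has_rank S d \<and> isomorphic_mon M S)
    in (a \<longleftrightarrow> c)
       \<and> (a \<longrightarrow> finite_rank M \<and> embeds_into_free M (UNIV :: nat set))
       \<and> (finite_rank M \<and> embeds_into_free M (UNIV :: 'i set) \<longrightarrow> a)"
  unfolding Let_def
proof (intro conjI impI)
  show "(\<exists>d::nat. embeds_into_free M {..<d})
     \<longleftrightarrow> (\<exists>d::nat. \<exists>S. S \<subseteq> Nd d \<and> is_monoid S \<and> has_rank S d \<and> isomorphic_mon M S)"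
    by (rule embeds_into_finite_free_iff_max_rank[OF assms])
next
  assume "\<exists>d::nat. embeds_into_free M {..<d}"
  then obtain d :: nat where e: "embeds_into_free M {..<d}" ..
  show "finite_rank M"
    by (rule embeds_into_free_imp_finite_rank[OF assms e])
  show "embeds_into_free M (UNIV :: nat set)"
    by (rule embeds_into_free_mono[OF e subset_UNIV])
next
  assume "finite_rank M \<and> embeds_into_free M (UNIV :: 'i set)"
  then show "\<exists>d::nat. embeds_into_free M {..<d}"
    by (elim conjE) (rule finite_rank_embeds_into_finite_free[OF assms])
qed

end
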